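(* Let $\mathcal{F}$ be a set of functions satisfying premise (P) below, and let $F\in\mathcal{F}$. Then for every positive integer $n$, either every closed $\{\neq_2\}\mid\{F\}$-network with exactly $n$ vertices on the $F$-side has value $0$, or every such network has nonzero value.
   Context: $\neq_2$ is the binary function with $\neq_2(x,y)=1$ if $x\neq y$ and $0$ otherwise. $\mathrm{Holant}_{\neq}(\mathcal{F})$ denotes the problem $\#\{\neq_2\}\mid\mathcal{F}$: inputs are finite bipartite multigraphs in which every vertex on one side has degree 2 and carries $\neq_2$ (so these act as edges), and every vertex $v$ on the other side ("$F$-side") carries a function $F_v\in\mathcal{F}$ of arity $\deg(v)$ with an ordering of its incident edges; the value is $\sum_{\sigma:E\to\{0,1\}}\prod_v(\text{vertex functions})$. A gadget is such a network with dangling edges at $F$-side vertices; its function is obtained by fixing the dangling edges and summing; a function is realizable if it is the function of a gadget. Premise (P): every binary function realizable in $\mathrm{Holant}_{\neq}(\mathcal{F})$ is of the form $\lambda\cdot\neq_2$ for some $\lambda\in\mathbb{C}$, and every arity-4 function realizable in $\mathrm{Holant}_{\neq}(\mathcal{F})$ is of the form $(x_1,\dots,x_4)\mapsto\lambda\,\neq_2(x_{\tau(1)},x_{\tau(2)})\neq_2(x_{\tau(3)},x_{\tau(4)})$ for some $\lambda\in\mathbb{C}$ and some permutation $\tau$ of $\{1,2,3,4\}$. *)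

theory Defs
  imports Complex_Main "HOL-Library.FuncSet"
begin

text \<open>A signature is a pair (arity, function on Boolean lists); only its values on
lists of length equal to the arity matter. Each degree-2 vertex carrying the disequality
connects two slots (an entry of es); dangling edges are the slots listed in ds,
in order.\<close>

type_synonym sig = "nat \<times> (bool list \<Rightarrow> complex)"
type_synonym slot = "nat \<times> nat"

definition neq2 :: "bool \<Rightarrow> bool \<Rightarrow> complex" where
  "neq2 x y = (if x \<noteq> y then 1 else 0)"

definition slots :: "nat \<Rightarrow> (nat \<Rightarrow> sig) \<Rightarrow> slot set" where
  "slots m sg = {(v, i). v < m \<and> i < fst (sg v)}"

definition edge_ends :: "(slot \<times> slot) list \<Rightarrow> slot list" where
  "edge_ends es = concat (map (\<lambda>(a, b). [a, b]) es)"

definition wf_gadget :: "sig set \<Rightarrow> nat \<Rightarrow> (nat \<Rightarrow> sig) \<Rightarrow> (slot \<times> slot) list \<Rightarrow> slot list \<Rightarrow> bool" where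
  "wf_gadget FF m sg es ds \<longleftrightarrow>
     (\<forall>v<m. sg v \<in> FF) \<and>
     distinct (edge_ends es @ ds) \<and>
     set (edge_ends es @ ds) = slots m sg"

text \<open>Value of the gadget at the assignment xs of its dangling edges: sum over all
edge assignments (one bit per slot = per edge of the bipartite graph incident to
an F-side vertex) agreeing with xs on the dangling edges.\<close>
definition gadget_val :: "nat \<Rightarrow> (nat \<Rightarrow> sig) \<Rightarrow> (slot \<times> slot) list \<Rightarrow> slot list \<Rightarrow> bool list \<Rightarrow> complex" where
  "gadget_val m sg es ds xs =
     (\<Sum>\<sigma> \<in> {\<sigma> \<in> PiE (slots m sg) (\<lambda>_. UNIV). \<forall>j<length ds. \<sigma> (ds ! j) = xs ! j}.
        (\<Prod>v<m. snd (sg v) (map (\<lambda>i. \<sigma> (v, i)) [0..<fst (sg v)])) *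
        prod_list (map (\<lambda>(a, b). neq2 (\<sigma> a) (\<sigma> b)) es))"

definition premise_P :: "sig set \<Rightarrow> bool" where
  "premise_P FF \<longleftrightarrow>
     (\<forall>m sg es ds. wf_gadget FF m sg es ds \<and> length ds = 2 \<longrightarrow>
        (\<exists>c. \<forall>x y. gadget_val m sg es ds [x, y] = c * neq2 x y)) \<and>
     (\<forall>m sg es ds. wf_gadget FF m sg es ds \<and> length ds = 4 \<longrightarrow>
        (\<exists>c \<tau>. bij_betw \<tau> {0..<4::nat} {0..<4} \<and>
           (\<forall>xs. length xs = 4 \<longrightarrow>
              gadget_val m sg es ds xs =
                c * neq2 (xs ! \<tau> 0) (xs ! \<tau> 1) * neq2 (xs ! \<tau> 2) (xs ! \<tau> 3))))"

end

theory Submission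
  imports Defs "HOL-Library.Multiset"
begin

text \<open>A closed \<open>{F}\<close>-network on \<open>n\<close> vertices is a perfect matching, by disequality edges,
of a fixed set of half-edge slots. Cutting two edges \<open>(a, b)\<close>, \<open>(c, d)\<close> out of it leaves an
arity-4 gadget, which by (P) is \<open>C\<close> times a product of two disequalities. Closing it up again,
either as \<open>(a, b), (c, d)\<close> or as \<open>(a, c), (b, d)\<close>, gives a nonzero multiple of \<open>C\<close>, so these
two networks vanish together. Any two perfect matchings of the same set are connected by such
switches, hence all closed networks vanish together.\<close>

lemma edge_ends_Nil [simp]: "edge_ends [] = []"
  by (simp add: edge_ends_def)

lemma edge_ends_Cons [simp]: "edge_ends ((a, b) # es) = a # b # edge_ends es"
  by (simp add: edge_ends_def)

lemma edge_ends_eq_Nil_iff [simp]: "edge_ends es = [] \<longleftrightarrow> es = []"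
  by (cases es) auto

lemma mset_edge_ends: "mset (edge_ends es) = (\<Sum>(a, b)\<in>#mset es. {#a, b#})"
  by (induction es) auto

lemma set_edge_ends: "set (edge_ends es) = (\<Union>(a, b)\<in>set es. {a, b})"
  by (induction es) auto

definition perfect_matching :: "slot set \<Rightarrow> (slot \<times> slot) list \<Rightarrow> bool" where
  "perfect_matching S es \<longleftrightarrow> distinct (edge_ends es) \<and> set (edge_ends es) = S"

lemma perfect_matching_Nil_iff: "perfect_matching S [] \<longleftrightarrow> S = {}"
  by (auto simp: perfect_matching_def)

lemma perfect_matching_Cons_iff:
  "perfect_matching S ((a, b) # es) \<longleftrightarrow>
     a \<noteq> b \<and> a \<in> S \<and> b \<in> S \<and> perfect_matching (S - {a, b}) es"
  by (auto simp: perfect_matching_def)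

lemma perfect_matching_mset_cong:
  assumes "mset (edge_ends es) = mset (edge_ends es')"
  shows "perfect_matching S es \<longleftrightarrow> perfect_matching S es'"
  using mset_eq_imp_distinct_iff[OF assms] mset_eq_setD[OF assms]
  by (simp add: perfect_matching_def)

lemma edge_ends_obtain_edge:
  assumes "x \<in> set (edge_ends es)"
  obtains y es' where "mset es = mset ((x, y) # es') \<or> mset es = mset ((y, x) # es')"
proof -
  from assms obtain u v where uv: "(u, v) \<in> set es" "x = u \<or> x = v"
    by (auto simp: set_edge_ends)
  then have "mset es = mset ((u, v) # remove1 (u, v) es)"
    by simp
  with uv(2) show ?thesis
    using that[of v "remove1 (u, v) es"] that[of u "remove1 (u, v) es"] by blast
qed

locale switch_invariant =
  fixes S :: "slot set" and P :: "(slot \<times> slot) list \<Rightarrow> bool"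
  assumes perm: "mset es = mset es' \<Longrightarrow> P es \<longleftrightarrow> P es'"
    and flip: "P ((a, b) # es) \<longleftrightarrow> P ((b, a) # es)"
    and switch: "perfect_matching S ((a, b) # (c, d) # es) \<Longrightarrow>
                   P ((a, b) # (c, d) # es) \<longleftrightarrow> P ((a, c) # (b, d) # es)"
begin

lemma obtain_edge:
  assumes "x \<in> set (edge_ends es)"
  obtains y es' where "P (pre @ es) \<longleftrightarrow> P ((x, y) # pre @ es')"
    "mset (edge_ends ((x, y) # es')) = mset (edge_ends es)"
proof -
  obtain y es' where "mset es = mset ((x, y) # es') \<or> mset es = mset ((y, x) # es')"
    using edge_ends_obtain_edge[OF assms] .
  then show ?thesis
  proof
    assume es: "mset es = mset ((x, y) # es')"
    show ?thesis
    proof (rule that)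
      show "P (pre @ es) \<longleftrightarrow> P ((x, y) # pre @ es')"
        by (rule perm) (simp add: es)
      show "mset (edge_ends ((x, y) # es')) = mset (edge_ends es)"
        by (simp add: mset_edge_ends es)
    qed
  next
    assume es: "mset es = mset ((y, x) # es')"
    show ?thesis
    proof (rule that)
      have "P (pre @ es) \<longleftrightarrow> P ((y, x) # pre @ es')"
        by (rule perm) (simp add: es)
      also have "\<dots> \<longleftrightarrow> P ((x, y) # pre @ es')"
        by (rule flip)
      finally show "P (pre @ es) \<longleftrightarrow> P ((x, y) # pre @ es')" .
      show "mset (edge_ends ((x, y) # es')) = mset (edge_ends es)"
        by (simp add: mset_edge_ends es add_mset_commute)
    qed
  qed
qed

lemma obtain_matching_with_edge:
  assumes "perfect_matching S es" "a \<in> S" "c \<in> S" "a \<noteq> c"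
  obtains es' where "P es \<longleftrightarrow> P ((a, c) # es')" "perfect_matching S ((a, c) # es')"
proof -
  have "a \<in> set (edge_ends es)"
    using assms by (simp add: perfect_matching_def)
  then obtain b es1 where P1: "P es \<longleftrightarrow> P ((a, b) # es1)"
    and M1: "mset (edge_ends ((a, b) # es1)) = mset (edge_ends es)"
    by (rule obtain_edge[where pre = "[]", unfolded append_Nil])
  have pm1: "perfect_matching S ((a, b) # es1)"
    using perfect_matching_mset_cong[OF M1] assms(1) by simp
  show ?thesis
  proof (cases "b = c")
    case True
    from P1 pm1 show ?thesis
      unfolding True by (rule that)
  next
    case False
    \<comment> \<open>\<open>c\<close> is matched to some \<open>d\<close>, and one switch turns
      \<open>(a, b), (c, d)\<close> into \<open>(a, c), (b, d)\<close>\<close>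
    have "c \<in> set (edge_ends es1)"
      using pm1 False assms by (auto simp: perfect_matching_def)
    then obtain d R where P2: "P ((a, b) # es1) \<longleftrightarrow> P ((c, d) # (a, b) # R)"
      and M2: "mset (edge_ends ((c, d) # R)) = mset (edge_ends es1)"
      by (rule obtain_edge[where pre = "[(a, b)]", unfolded append_Cons append_Nil])
    have pm2: "perfect_matching S ((a, b) # (c, d) # R)"
      using pm1 perfect_matching_mset_cong[of "(a, b) # (c, d) # R" "(a, b) # es1"] M2 by simp
    note P1
    also note P2
    also have "P ((c, d) # (a, b) # R) \<longleftrightarrow> P ((a, b) # (c, d) # R)"
      by (rule perm) simp
    also have "\<dots> \<longleftrightarrow> P ((a, c) # (b, d) # R)"
      using switch[OF pm2] .
    finally have "P es \<longleftrightarrow> P ((a, c) # (b, d) # R)" .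
    moreover have "perfect_matching S ((a, c) # (b, d) # R)"
      using pm2 perfect_matching_mset_cong[of "(a, c) # (b, d) # R" "(a, b) # (c, d) # R"]
      by (simp add: add_mset_commute)
    ultimately show ?thesis
      by (rule that)
  qed
qed

lemma switch_invariant_Cons:
  assumes "a \<noteq> c" "a \<in> S" "c \<in> S"
  shows "switch_invariant (S - {a, c}) (\<lambda>es. P ((a, c) # es))"
proof
  show "P ((a, c) # es) \<longleftrightarrow> P ((a, c) # es')" if "mset es = mset es'" for es es'
    by (rule perm) (simp add: that)
  show "P ((a, c) # (x, y) # es) \<longleftrightarrow> P ((a, c) # (y, x) # es)" for x y es
  proof -
    have "P ((a, c) # (x, y) # es) \<longleftrightarrow> P ((x, y) # (a, c) # es)"
      by (rule perm) (simp add: add_mset_commute)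
    also have "\<dots> \<longleftrightarrow> P ((y, x) # (a, c) # es)"
      by (rule flip)
    also have "\<dots> \<longleftrightarrow> P ((a, c) # (y, x) # es)"
      by (rule perm) (simp add: add_mset_commute)
    finally show ?thesis .
  qed
  show "P ((a, c) # (x, y) # (z, w) # es) \<longleftrightarrow> P ((a, c) # (x, z) # (y, w) # es)"
    if "perfect_matching (S - {a, c}) ((x, y) # (z, w) # es)" for x y z w es
  proof -
    have "S - {a, c} - {x, y} - {z, w} = S - {x, y} - {z, w} - {a, c}"
      by auto
    then have pm: "perfect_matching S ((x, y) # (z, w) # (a, c) # es)"
      using that assms by (auto simp: perfect_matching_Cons_iff)
    have "P ((a, c) # (x, y) # (z, w) # es) \<longleftrightarrow> P ((x, y) # (z, w) # (a, c) # es)"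
      by (rule perm) (simp add: add_mset_commute)
    also have "\<dots> \<longleftrightarrow> P ((x, z) # (y, w) # (a, c) # es)"
      using switch[OF pm] .
    also have "\<dots> \<longleftrightarrow> P ((a, c) # (x, z) # (y, w) # es)"
      by (rule perm) (simp add: add_mset_commute)
    finally show ?thesis .
  qed
qed

end

lemma switch_invariant_perfect_matchings:
  assumes "switch_invariant S P" "perfect_matching S es1" "perfect_matching S es2"
  shows "P es1 \<longleftrightarrow> P es2"
  using assms
proof (induction es2 arbitrary: S P es1)
  case Nil
  then show ?case
    by (simp add: perfect_matching_Nil_iff perfect_matching_def)
next
  case (Cons e es2)
  obtain a c where e: "e = (a, c)"
    by (cases e)
  then have ac: "a \<noteq> c" "a \<in> S" "c \<in> S"
    using Cons.prems(3) by (simp_all add: perfect_matching_Cons_iff)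
  obtain es1' where P1: "P es1 \<longleftrightarrow> P ((a, c) # es1')" and pm1: "perfect_matching S ((a, c) # es1')"
    using switch_invariant.obtain_matching_with_edge[OF Cons.prems(1,2) ac(2,3,1)] .
  have "perfect_matching (S - {a, c}) es1'" "perfect_matching (S - {a, c}) es2"
    using pm1 Cons.prems(3) e by (simp_all add: perfect_matching_Cons_iff)
  then have "P ((a, c) # es1') \<longleftrightarrow> P ((a, c) # es2)"
    by (rule Cons.IH[OF switch_invariant.switch_invariant_Cons[OF Cons.prems(1) ac]])
  then show ?case
    using P1 e by simp
qed

lemma neq2_commute: "neq2 x y = neq2 y x"
  by (auto simp: neq2_def)

lemma sum_length_Suc:
  "(\<Sum>xs | length xs = Suc k. f xs) = (\<Sum>x\<in>UNIV. \<Sum>ys | length ys = k. f ((x::bool) # ys))"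
proof -
  have img: "{xs. length xs = Suc k} = case_prod (#) ` (UNIV \<times> {ys. length ys = k})"
    by (auto simp: length_Suc_conv image_iff)
  have "inj_on (case_prod (#)) (UNIV \<times> {ys::bool list. length ys = k})"
    by (auto simp: inj_on_def)
  then show ?thesis
    unfolding img by (simp add: sum.reindex sum.cartesian_product split_def)
qed

definition pairing :: "nat \<Rightarrow> nat \<Rightarrow> nat \<Rightarrow> nat \<Rightarrow> bool list \<Rightarrow> complex" where
  "pairing i j k l xs = neq2 (xs ! i) (xs ! j) * neq2 (xs ! k) (xs ! l)"

definition pairings4 :: "(bool list \<Rightarrow> complex) set" where
  "pairings4 = {pairing 0 1 2 3, pairing 0 2 1 3, pairing 0 3 1 2}"

lemma less_4_cases: "(i::nat) < 4 \<Longrightarrow> i = 0 \<or> i = 1 \<or> i = 2 \<or> i = 3"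
  by auto

lemma pairing_in_pairings4:
  assumes "i < 4" "j < 4" "k < 4" "l < 4" "distinct [i, j, k, l]"
  shows "pairing i j k l \<in> pairings4"
  using less_4_cases[OF assms(1)] less_4_cases[OF assms(2)] less_4_cases[OF assms(3)]
    less_4_cases[OF assms(4)] assms(5)
  by (elim disjE) (auto simp: pairings4_def pairing_def fun_eq_iff neq2_commute mult.commute)

lemma sum_pairings4_eq_0_iff:
  assumes "p \<in> pairings4" "q \<in> pairings4"
  shows "(\<Sum>xs | length xs = 4. p xs * (C * q xs)) = 0 \<longleftrightarrow> C = 0"
proof -
  \<comment> \<open>two pairings of four points form even cycles,
    so all four disequalities can hold at once\<close>
  have "(\<Sum>xs | length xs = 4. p xs * q xs) \<noteq> 0"
    using assms by (auto simp: pairings4_def numeral_eq_Suc sum_length_Suc UNIV_bool pairing_def neq2_def)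
  moreover have "(\<Sum>xs | length xs = 4. p xs * (C * q xs)) = C * (\<Sum>xs | length xs = 4. p xs * q xs)"
    by (simp add: sum_distrib_left mult.left_commute)
  ultimately show ?thesis
    by simp
qed

definition assignments :: "nat \<Rightarrow> (nat \<Rightarrow> sig) \<Rightarrow> (slot \<Rightarrow> bool) set" where
  "assignments n sg = PiE (slots n sg) (\<lambda>_. UNIV)"

definition gadget_weight ::
    "nat \<Rightarrow> (nat \<Rightarrow> sig) \<Rightarrow> (slot \<times> slot) list \<Rightarrow> (slot \<Rightarrow> bool) \<Rightarrow> complex" where
  "gadget_weight n sg es \<sigma> =
     (\<Prod>v<n. snd (sg v) (map (\<lambda>i. \<sigma> (v, i)) [0..<fst (sg v)])) *
     prod_list (map (\<lambda>(a, b). neq2 (\<sigma> a) (\<sigma> b)) es)"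

lemma gadget_val_eq_sum_weight:
  "gadget_val n sg es ds xs =
     (\<Sum>\<sigma> \<in> {\<sigma> \<in> assignments n sg. \<forall>j<length ds. \<sigma> (ds ! j) = xs ! j}. gadget_weight n sg es \<sigma>)"
  by (simp add: gadget_val_def assignments_def gadget_weight_def)

lemma closed_gadget_val_eq_sum_weight:
  "gadget_val n sg es [] [] = (\<Sum>\<sigma> \<in> assignments n sg. gadget_weight n sg es \<sigma>)"
  by (simp add: gadget_val_eq_sum_weight)

lemma finite_assignments: "finite (assignments n sg)"
proof -
  have "slots n sg = Sigma {..<n} (\<lambda>v. {..<fst (sg v)})"
    by (auto simp: slots_def)
  then show ?thesis
    by (simp add: assignments_def finite_PiE)
qed

lemma gadget_weight_Cons:
  "gadget_weight n sg ((a, b) # es) \<sigma> = neq2 (\<sigma> a) (\<sigma> b) * gadget_weight n sg es \<sigma>"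
  by (simp add: gadget_weight_def mult.left_commute)

lemma gadget_weight_mset_cong:
  assumes "mset es = mset es'"
  shows "gadget_weight n sg es = gadget_weight n sg es'"
proof -
  have "prod_list (map f es) = prod_list (map f es')" for f :: "slot \<times> slot \<Rightarrow> complex"
    by (metis assms mset_map prod_mset_prod_list)
  then show ?thesis
    by (simp add: gadget_weight_def fun_eq_iff)
qed

lemma gadget_weight_flip:
  "gadget_weight n sg ((a, b) # es) = gadget_weight n sg ((b, a) # es)"
  by (simp add: gadget_weight_Cons fun_eq_iff neq2_commute)

lemma sum_assignments_glue:
  "(\<Sum>\<sigma> \<in> assignments n sg. g (map \<sigma> ds) * gadget_weight n sg es \<sigma>) =
     (\<Sum>xs | length xs = length ds. g xs * gadget_val n sg es ds xs)"
proof -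
  define fibre where "fibre xs = {\<sigma> \<in> assignments n sg. map \<sigma> ds = xs}" for xs
  have "(\<Sum>\<sigma> \<in> assignments n sg. g (map \<sigma> ds) * gadget_weight n sg es \<sigma>) =
     (\<Sum>xs | length xs = length ds. \<Sum>\<sigma> \<in> fibre xs. g (map \<sigma> ds) * gadget_weight n sg es \<sigma>)"
    unfolding fibre_def using finite_lists_length_eq[of "UNIV :: bool set"]
    by (intro sum.group[symmetric]) (auto simp: finite_assignments)
  also have "\<dots> = (\<Sum>xs | length xs = length ds. g xs * (\<Sum>\<sigma> \<in> fibre xs. gadget_weight n sg es \<sigma>))"
    by (simp add: fibre_def sum_distrib_left)
  also have "\<dots> = (\<Sum>xs | length xs = length ds. g xs * gadget_val n sg es ds xs)"
  proof (intro sum.cong refl)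
    fix xs :: "bool list"
    assume "xs \<in> {xs. length xs = length ds}"
    then have "fibre xs = {\<sigma> \<in> assignments n sg. \<forall>j<length ds. \<sigma> (ds ! j) = xs ! j}"
      by (auto simp: fibre_def list_eq_iff_nth_eq)
    then show "g xs * (\<Sum>\<sigma> \<in> fibre xs. gadget_weight n sg es \<sigma>) = g xs * gadget_val n sg es ds xs"
      by (simp add: gadget_val_eq_sum_weight)
  qed
  finally show ?thesis .
qed

lemma gadget_val_cut_two_edges:
  assumes "length ds = 4" "i < 4" "j < 4" "k < 4" "l < 4"
  shows "gadget_val n sg ((ds ! i, ds ! j) # (ds ! k, ds ! l) # es) [] [] =
           (\<Sum>xs | length xs = 4. pairing i j k l xs * gadget_val n sg es ds xs)"
proof -
  have "gadget_val n sg ((ds ! i, ds ! j) # (ds ! k, ds ! l) # es) [] [] =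
      (\<Sum>\<sigma> \<in> assignments n sg. pairing i j k l (map \<sigma> ds) * gadget_weight n sg es \<sigma>)"
    using assms by (simp add: closed_gadget_val_eq_sum_weight gadget_weight_Cons pairing_def mult.assoc)
  then show ?thesis
    by (simp add: sum_assignments_glue assms(1))
qed

lemma premise_P_arity4:
  assumes "premise_P FF" "wf_gadget FF n sg es ds" "length ds = 4"
  obtains C q where "q \<in> pairings4" "\<And>xs. length xs = 4 \<Longrightarrow> gadget_val n sg es ds xs = C * q xs"
proof -
  obtain C \<tau> where bij: "bij_betw \<tau> {0..<4::nat} {0..<4}" and val: "\<And>xs. length xs = 4 \<Longrightarrow>
      gadget_val n sg es ds xs = C * neq2 (xs ! \<tau> 0) (xs ! \<tau> 1) * neq2 (xs ! \<tau> 2) (xs ! \<tau> 3)"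
    using assms unfolding premise_P_def by blast
  have "inj_on \<tau> {0..<4}"
    using bij by (simp add: bij_betw_def)
  then have "distinct [\<tau> 0, \<tau> 1, \<tau> 2, \<tau> 3]"
    by (auto dest: inj_onD)
  moreover have "\<tau> i < 4" if "i < 4" for i
    using bij that by (auto simp: bij_betw_def)
  ultimately have "pairing (\<tau> 0) (\<tau> 1) (\<tau> 2) (\<tau> 3) \<in> pairings4"
    by (intro pairing_in_pairings4) simp_all
  then show ?thesis
    by (rule that[of _ C]) (simp add: val pairing_def mult.assoc)
qed

lemma closed_gadget_switch_invariant:
  assumes "premise_P FF" "\<forall>v<n. sg v \<in> FF"
  shows "switch_invariant (slots n sg) (\<lambda>es. gadget_val n sg es [] [] = 0)"
proof
  show "gadget_val n sg es [] [] = 0 \<longleftrightarrow> gadget_val n sg es' [] [] = 0" if "mset es = mset es'" for es es'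
    using gadget_weight_mset_cong[OF that] by (simp add: closed_gadget_val_eq_sum_weight)
  show "gadget_val n sg ((a, b) # es) [] [] = 0 \<longleftrightarrow> gadget_val n sg ((b, a) # es) [] [] = 0" for a b es
    by (simp only: closed_gadget_val_eq_sum_weight gadget_weight_flip[of n sg a b es])
  show "gadget_val n sg ((a, b) # (c, d) # es) [] [] = 0 \<longleftrightarrow> gadget_val n sg ((a, c) # (b, d) # es) [] [] = 0"
    if "perfect_matching (slots n sg) ((a, b) # (c, d) # es)" for a b c d es
  proof -
    let ?ds = "[a, b, c, d]"
    have wf: "wf_gadget FF n sg es ?ds"
      using that assms(2) by (auto simp: wf_gadget_def perfect_matching_def)
    have len: "length ?ds = 4"
      by simp
    obtain C q where q: "q \<in> pairings4"
      and val: "\<And>xs. length xs = 4 \<Longrightarrow> gadget_val n sg es ?ds xs = C * q xs"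
      using premise_P_arity4[OF assms(1) wf len] by blast
    have "gadget_val n sg ((?ds ! i, ?ds ! j) # (?ds ! k, ?ds ! l) # es) [] [] = 0 \<longleftrightarrow> C = 0"
      if "pairing i j k l \<in> pairings4" "i < 4" "j < 4" "k < 4" "l < 4" for i j k l
    proof -
      have "gadget_val n sg ((?ds ! i, ?ds ! j) # (?ds ! k, ?ds ! l) # es) [] [] =
          (\<Sum>xs | length xs = 4. pairing i j k l xs * (C * q xs))"
        unfolding gadget_val_cut_two_edges[OF len that(2-5)] by (intro sum.cong) (simp_all add: val)
      then show ?thesis
        using sum_pairings4_eq_0_iff[OF that(1) q] by simp
    qed
    from this[of 0 1 2 3] this[of 0 2 1 3] show ?thesis
      by (simp add: pairings4_def)
  qed
qed

lemma slots_cong: "\<forall>v<n. sg v = sg' v \<Longrightarrow> slots n sg = slots n sg'"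
  by (auto simp: slots_def)

lemma gadget_val_cong:
  assumes "\<forall>v<n. sg v = sg' v"
  shows "gadget_val n sg = gadget_val n sg'"
  unfolding gadget_val_def slots_cong[OF assms] using assms
  by (intro ext sum.cong refl arg_cong2[where f = "(*)"] prod.cong) auto

lemma wf_closed_gadget_iff:
  "wf_gadget FF n sg es [] \<longleftrightarrow> (\<forall>v<n. sg v \<in> FF) \<and> perfect_matching (slots n sg) es"
  by (simp add: wf_gadget_def perfect_matching_def)

theorem mainTheorem9:
  fixes FF :: "sig set" and F :: sig and n :: nat
  assumes "premise_P FF" and "F \<in> FF" and "n > 0"
  shows "(\<forall>sg es. wf_gadget {F} n sg es [] \<longrightarrow> gadget_val n sg es [] [] = 0) \<or>
         (\<forall>sg es. wf_gadget {F} n sg es [] \<longrightarrow> gadget_val n sg es [] [] \<noteq> 0)"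
proof -
  let ?sgF = "\<lambda>_::nat. F"
  have inv: "switch_invariant (slots n ?sgF) (\<lambda>es. gadget_val n ?sgF es [] [] = 0)"
    using assms(2) by (intro closed_gadget_switch_invariant[OF assms(1)]) simp
  have closed: "perfect_matching (slots n ?sgF) es \<and> gadget_val n sg es [] [] = gadget_val n ?sgF es [] []"
    if "wf_gadget {F} n sg es []" for sg es
  proof -
    have eq: "\<forall>v<n. sg v = ?sgF v"
      using that by (simp add: wf_closed_gadget_iff)
    with that show ?thesis
      unfolding wf_closed_gadget_iff slots_cong[OF eq] gadget_val_cong[OF eq] by blast
  qed
  have "gadget_val n sg es [] [] = 0 \<longleftrightarrow> gadget_val n sg' es' [] [] = 0"
    if "wf_gadget {F} n sg es []" "wf_gadget {F} n sg' es' []" for sg es sg' es'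
    using switch_invariant_perfect_matchings[OF inv] closed[OF that(1)] closed[OF that(2)] by simp
  then show ?thesis
    by blast
qed

end
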